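(* Let $n\ge5$, $x_1,\dots,x_{n-1}>0$, $\gamma,\delta>0$ with $\gamma\ne1\ne\delta$, $x_0=1$, and let $\mathbf{R}$ be the $n\times n$ matrix with entries $r_{ij}=x_{j-1}/x_{i-1}$ except $r_{12}=\delta x_1$, $r_{21}=1/(\delta x_1)$, $r_{34}=\gamma x_3/x_2$, $r_{43}=x_2/(\gamma x_3)$. Let $\mathbf{w}^{EM}$ be its principal right eigenvector. If $\gamma,\delta>1$, then $w_1^{EM}/w_4^{EM}>x_3$; if $\gamma,\delta<1$, then $w_1^{EM}/w_4^{EM}<x_3$.
   Context: The principal right eigenvector is the positive (Perron) eigenvector belonging to the largest eigenvalue. *)

theory Defs
  imports "Jordan_Normal_Form.Char_Poly"
begin

text \<open>The n x n matrix R of the paper, with 0-based indices: entry (i,j) here is r_{(i+1)(j+1)}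
  of the paper, i.e. x j / x i, except for the four perturbed entries.\<close>
definition EM_matrix :: "nat \<Rightarrow> (nat \<Rightarrow> real) \<Rightarrow> real \<Rightarrow> real \<Rightarrow> real mat" where
  "EM_matrix n x \<gamma> \<delta> = mat n n (\<lambda>(i, j).
     if (i, j) = (0, 1) then \<delta> * x 1
     else if (i, j) = (1, 0) then 1 / (\<delta> * x 1)
     else if (i, j) = (2, 3) then \<gamma> * x 3 / x 2
     else if (i, j) = (3, 2) then x 2 / (\<gamma> * x 3)
     else x j / x i)"

definition principal_right_eigenvector :: "real mat \<Rightarrow> real vec \<Rightarrow> bool" where
  "principal_right_eigenvector A w \<longleftrightarrow>
     (\<exists>r. eigenvector A w r \<and> (\<forall>i < dim_vec w. w $ i > 0) \<and>
          (\<forall>\<mu>. eigenvalue (map_mat complex_of_real A) \<mu> \<longrightarrow> cmod \<mu> \<le> r))"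

end

theory Submission
  imports Defs
begin

text \<open>In the paper's 1-based indexing let \<open>S = \<Sum>\<^sub>j x\<^sub>j\<^sub>-\<^sub>1 w\<^sub>j\<close>. Every row \<open>i\<close> of \<open>R\<close>
  untouched by the four perturbed entries reads \<open>x\<^sub>i\<^sub>-\<^sub>1 (R w)\<^sub>i = S\<close>; the perturbations only add a single correction term.
  Hence the eigen-equations for rows 1 and 4 become
  \<open>\<lambda> w\<^sub>1 = S + (\<delta> - 1) x\<^sub>1 w\<^sub>2\<close> and \<open>\<lambda> x\<^sub>3 w\<^sub>4 = S + (1/\<gamma> - 1) x\<^sub>2 w\<^sub>3\<close>,
  while an unperturbed row (it exists since \<open>n \<ge> 5\<close>) shows \<open>\<lambda> > 0\<close>.
  Comparing the two equations, the signs of \<open>\<delta> - 1\<close> and \<open>1/\<gamma> - 1\<close> decide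
  whether \<open>w\<^sub>1 > x\<^sub>3 w\<^sub>4\<close> or \<open>w\<^sub>1 < x\<^sub>3 w\<^sub>4\<close>.\<close>

lemma eigenvector_row_eq:
  fixes A :: "'a::comm_ring_1 mat"
  assumes "eigenvector A w r" and "A \<in> carrier_mat n n" and "i < n"
  shows "r * w $ i = (\<Sum>j<n. A $$ (i, j) * w $ j)"
proof -
  have w: "w \<in> carrier_vec n" and eq: "A *\<^sub>v w = r \<cdot>\<^sub>v w"
    using assms(1,2) unfolding eigenvector_def by auto
  have "r * w $ i = (A *\<^sub>v w) $ i" using eq w assms(3) by simp
  also have "\<dots> = (\<Sum>j<n. A $$ (i, j) * w $ j)"
    using w assms(2,3) by (auto simp: scalar_prod_def lessThan_atLeast0 intro!: sum.cong)
  finally show ?thesis .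
qed

lemma principal_right_eigenvector_positive:
  assumes "principal_right_eigenvector A w" and "A \<in> carrier_mat n n"
  obtains r where "eigenvector A w r" and "\<And>i. i < n \<Longrightarrow> w $ i > 0"
proof -
  obtain r where ev: "eigenvector A w r" and "\<forall>i < dim_vec w. w $ i > 0"
    using assms(1) unfolding principal_right_eigenvector_def by blast
  moreover have "dim_vec w = n"
    using ev assms(2) unfolding eigenvector_def by (metis carrier_vecD carrier_matD(1))
  ultimately show thesis using that by simp
qed

lemma EM_matrix_carrier: "EM_matrix n x \<gamma> \<delta> \<in> carrier_mat n n"
  by (simp add: EM_matrix_def)

lemma EM_matrix_row_0:
  assumes "1 < n" and "x 0 = 1"
  shows "(\<Sum>j<n. EM_matrix n x \<gamma> \<delta> $$ (0, j) * v $ j)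
       = (\<Sum>j<n. x j * v $ j) + (\<delta> - 1) * x 1 * v $ 1"
proof -
  have "(\<Sum>j<n. EM_matrix n x \<gamma> \<delta> $$ (0, j) * v $ j)
      = (\<Sum>j<n. x j * v $ j + (if j = 1 then (\<delta> - 1) * x 1 * v $ 1 else 0))"
    using assms by (intro sum.cong refl) (auto simp: EM_matrix_def algebra_simps)
  also have "\<dots> = (\<Sum>j<n. x j * v $ j) + (\<delta> - 1) * x 1 * v $ 1"
    using assms(1) by (simp add: sum.distrib)
  finally show ?thesis .
qed

lemma EM_matrix_row_3:
  assumes "3 < n" and "x 3 \<noteq> 0" and "\<gamma> \<noteq> 0"
  shows "x 3 * (\<Sum>j<n. EM_matrix n x \<gamma> \<delta> $$ (3, j) * v $ j)
       = (\<Sum>j<n. x j * v $ j) + (1 / \<gamma> - 1) * x 2 * v $ 2"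
proof -
  have "x 3 * (\<Sum>j<n. EM_matrix n x \<gamma> \<delta> $$ (3, j) * v $ j)
      = (\<Sum>j<n. x j * v $ j + (if j = 2 then (1 / \<gamma> - 1) * x 2 * v $ 2 else 0))"
    unfolding sum_distrib_left
    using assms by (intro sum.cong refl) (auto simp: EM_matrix_def field_simps)
  also have "\<dots> = (\<Sum>j<n. x j * v $ j) + (1 / \<gamma> - 1) * x 2 * v $ 2"
    using assms(1) by (simp add: sum.distrib)
  finally show ?thesis .
qed

lemma EM_matrix_row_unperturbed:
  assumes "4 \<le> i" and "i < n" and "x i \<noteq> 0"
  shows "x i * (\<Sum>j<n. EM_matrix n x \<gamma> \<delta> $$ (i, j) * v $ j) = (\<Sum>j<n. x j * v $ j)"
  unfolding sum_distrib_left
  using assms by (intro sum.cong refl) (auto simp: EM_matrix_def)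

lemma EM_eigen_equations:
  assumes ev: "eigenvector (EM_matrix n x \<gamma> \<delta>) w r"
    and "4 < n" and "x 0 = 1" and "x 3 \<noteq> 0" and "x 4 \<noteq> 0" and "\<gamma> \<noteq> 0"
  shows "r * w $ 0 = (\<Sum>j<n. x j * w $ j) + (\<delta> - 1) * (x 1 * w $ 1)"
    and "r * (x 3 * w $ 3) = (\<Sum>j<n. x j * w $ j) + (1 / \<gamma> - 1) * (x 2 * w $ 2)"
    and "r * (x 4 * w $ 4) = (\<Sum>j<n. x j * w $ j)"
proof -
  note row = eigenvector_row_eq[OF ev EM_matrix_carrier]
  show "r * w $ 0 = (\<Sum>j<n. x j * w $ j) + (\<delta> - 1) * (x 1 * w $ 1)"
    using EM_matrix_row_0[of n x \<gamma> \<delta> w] row[of 0] assms(2,3) by (simp add: mult.assoc)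
  have "r * (x 3 * w $ 3) = x 3 * (\<Sum>j<n. EM_matrix n x \<gamma> \<delta> $$ (3, j) * w $ j)"
    using row[of 3] assms(2) by simp
  also have "\<dots> = (\<Sum>j<n. x j * w $ j) + (1 / \<gamma> - 1) * (x 2 * w $ 2)"
    using EM_matrix_row_3[of n x \<gamma> \<delta> w] assms(2,4,6) by (simp add: mult.assoc)
  finally show "r * (x 3 * w $ 3) = (\<Sum>j<n. x j * w $ j) + (1 / \<gamma> - 1) * (x 2 * w $ 2)" .
  have "r * (x 4 * w $ 4) = x 4 * (\<Sum>j<n. EM_matrix n x \<gamma> \<delta> $$ (4, j) * w $ j)"
    using row[of 4] assms(2) by simp
  also have "\<dots> = (\<Sum>j<n. x j * w $ j)"
    using EM_matrix_row_unperturbed[of 4 n x] assms(2,5) by simp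
  finally show "r * (x 4 * w $ 4) = (\<Sum>j<n. x j * w $ j)" .
qed

theorem mainTheorem20:
  fixes n :: nat and x :: "nat \<Rightarrow> real" and \<gamma> \<delta> :: real and w :: "real vec"
  assumes "n \<ge> 5"
    and "\<forall>i \<in> {1..n-1}. x i > 0"
    and "x 0 = 1"
    and "\<gamma> > 0" and "\<delta> > 0" and "\<gamma> \<noteq> 1" and "\<delta> \<noteq> 1"
    and "principal_right_eigenvector (EM_matrix n x \<gamma> \<delta>) w"
  shows "(\<gamma> > 1 \<and> \<delta> > 1 \<longrightarrow> w $ 0 / w $ 3 > x 3)
       \<and> (\<gamma> < 1 \<and> \<delta> < 1 \<longrightarrow> w $ 0 / w $ 3 < x 3)"
proof -
  obtain r where ev: "eigenvector (EM_matrix n x \<gamma> \<delta>) w r" and wpos: "\<And>i. i < n \<Longrightarrow> w $ i > 0"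
    using principal_right_eigenvector_positive[OF assms(8) EM_matrix_carrier] by blast
  have xpos: "\<And>i. i < n \<Longrightarrow> x i > 0"
    using assms(2,3) by (case_tac "i = 0") auto
  have n4: "4 < n" using assms(1) by simp
  have "x 3 \<noteq> 0" "x 4 \<noteq> 0" "\<gamma> \<noteq> 0" using xpos[of 3] xpos[of 4] n4 assms(4) by auto
  note eqs = EM_eigen_equations[OF ev n4 assms(3) this]
  have "(\<Sum>j<n. x j * w $ j) > 0"
    using n4 xpos wpos by (intro sum_pos) (auto simp: lessThan_empty_iff)
  then have "r > 0" using eqs(3) xpos[of 4] wpos[of 4] n4 by (metis zero_less_mult_pos2 mult_pos_pos)
  have "w $ 3 > 0" using wpos n4 by simp
  then have ratio_gt: "w $ 0 / w $ 3 > x 3 \<longleftrightarrow> r * w $ 0 > r * (x 3 * w $ 3)"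
    and ratio_lt: "w $ 0 / w $ 3 < x 3 \<longleftrightarrow> r * w $ 0 < r * (x 3 * w $ 3)"
    using \<open>r > 0\<close> by (simp_all add: pos_less_divide_eq divide_less_eq)
  have pos12: "x 1 * w $ 1 > 0" "x 2 * w $ 2 > 0" using xpos wpos n4 by auto
  show ?thesis
  proof (intro conjI impI)
    assume "1 < \<gamma> \<and> 1 < \<delta>"
    then have "(\<delta> - 1) * (x 1 * w $ 1) > 0" "(1 / \<gamma> - 1) * (x 2 * w $ 2) < 0"
      using pos12 by (auto intro: mult_neg_pos)
    then show "w $ 0 / w $ 3 > x 3" using ratio_gt eqs(1,2) by linarith
  next
    assume "\<gamma> < 1 \<and> \<delta> < 1"
    then have "(\<delta> - 1) * (x 1 * w $ 1) < 0" "(1 / \<gamma> - 1) * (x 2 * w $ 2) > 0"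
      using pos12 assms(4) by (auto intro!: mult_neg_pos mult_pos_pos)
    then show "w $ 0 / w $ 3 < x 3" using ratio_lt eqs(1,2) by linarith
  qed
qed

end
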